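(* Let $(V,L,\varphi,E)$ and $(V,C,\psi,E)$ be valuation systems such that $\psi$ extends $\varphi$. Then for every ordinal number $\alpha$: if $\psi$ is $\Pi_\alpha$-extendible, then $\varphi$ is $\Pi_\alpha$-extendible and $\Pi_\alpha\psi$ extends $\Pi_\alpha\varphi$; and if $\psi$ is $\Sigma_\alpha$-extendible, then $\varphi$ is $\Sigma_\alpha$-extendible and $\Sigma_\alpha\psi$ extends $\Sigma_\alpha\varphi$.
   Context: A valuation system $(V,L,\varphi,E)$ consists of: (i) a lattice $V$ which is $\sigma$-distributive (for every $a\in V$ and sequence $(b_n)$ with existing infimum, $\bigwedge_n(a\vee b_n)$ exists and equals $a\vee\bigwedge_n b_n$, and dually for suprema); (ii) a sublattice $L$ of $V$; (iii) a partially ordered abelian group $E$ which is R-complete (whenever $x_1\ge x_2\ge\cdots$ and $y_1\ge y_2\ge\cdots$ in $E$ are such that $\bigwedge_n(x_n+y_n)$ exists, $\bigwedge_n x_n$ and $\bigwedge_n y_n$ exist; dually for increasing sequences); (iv) a valuation $\varphi:L\to E$ (order-preserving, $\varphi(a\wedge b)+\varphi(a\vee b)=\varphi(a)+\varphi(b)$). A map $\psi:C\to E$ extends $\varphi:L\to E$ if $L\subseteq C$ and $\psi|_L=\varphi$. A decreasing (resp. increasing) sequence $(a_n)$ in $L$ is $\varphi$-convergent if $\bigwedge_n a_n$ exists in $V$ and $\bigwedge_n\varphi(a_n)$ exists in $E$ (resp. with suprema). $\Pi L:=\{\bigwedge_n a_n:(a_n)\ \varphi\text{-convergent decreasing}\}$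 and $\varphi$ is $\Pi$-extendible if there is a valuation $\Pi\varphi:\Pi L\to E$ with $\Pi\varphi(\bigwedge_n a_n)=\bigwedge_n\varphi(a_n)$ for all such sequences; $\Sigma L,\Sigma$-extendible, $\Sigma\varphi$ dually. Hierarchy (transfinite recursion): $\varphi$ is $\Pi_0$- and $\Sigma_0$-extendible with $\Pi_0\varphi=\Sigma_0\varphi=\varphi$; $\varphi$ is $\Pi_{\alpha+1}$-extendible iff it is $\Sigma_\alpha$-extendible and $\Sigma_\alpha\varphi$ is $\Pi$-extendible, with $\Pi_{\alpha+1}\varphi=\Pi(\Sigma_\alpha\varphi)$; $\varphi$ is $\Sigma_{\alpha+1}$-extendible iff it is $\Pi_\alpha$-extendible and $\Pi_\alpha\varphi$ is $\Sigma$-extendible, with $\Sigma_{\alpha+1}\varphi=\Sigma(\Pi_\alpha\varphi)$; at a limit $\lambda$, $\varphi$ is $\Pi_\lambda$-extendible iff $\Pi_\alpha$-extendible for all $\alpha<\lambda$, and then $\Pi_\lambda\varphi$ is the common extension of the $\Pi_\alpha\varphi$ ($\alpha<\lambda$) on $\bigcup_{\alpha<\lambda}\Pi_\alpha L$; similarly for $\Sigma_\lambda$. The same definitions apply to $\psi$. *)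

theory Defs
  imports Main
begin

definition is_glb :: "'a::order set \<Rightarrow> 'a \<Rightarrow> bool" where
  "is_glb S x \<longleftrightarrow> (\<forall>y\<in>S. x \<le> y) \<and> (\<forall>z. (\<forall>y\<in>S. z \<le> y) \<longrightarrow> z \<le> x)"

definition is_lub :: "'a::order set \<Rightarrow> 'a \<Rightarrow> bool" where
  "is_lub S x \<longleftrightarrow> (\<forall>y\<in>S. y \<le> x) \<and> (\<forall>z. (\<forall>y\<in>S. y \<le> z) \<longrightarrow> x \<le> z)"

text \<open>The lattice V is the whole type 'v; sigma-distributivity of V.\<close>
definition sigma_distributive :: "('v::lattice) itself \<Rightarrow> bool" where
  "sigma_distributive (T :: 'v itself) \<longleftrightarrow>
     (\<forall>(a::'v) (b::nat \<Rightarrow> 'v) x. is_glb (range b) x \<longrightarrow> is_glb (range (\<lambda>n. sup a (b n))) (sup a x)) \<and>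
     (\<forall>(a::'v) (b::nat \<Rightarrow> 'v) x. is_lub (range b) x \<longrightarrow> is_lub (range (\<lambda>n. inf a (b n))) (inf a x))"

definition R_complete :: "('e::ordered_ab_group_add) itself \<Rightarrow> bool" where
  "R_complete (T :: 'e itself) \<longleftrightarrow>
     (\<forall>x y :: nat \<Rightarrow> 'e. antimono x \<and> antimono y \<and> (\<exists>s. is_glb (range (\<lambda>n. x n + y n)) s)
        \<longrightarrow> (\<exists>s. is_glb (range x) s) \<and> (\<exists>s. is_glb (range y) s)) \<and>
     (\<forall>x y :: nat \<Rightarrow> 'e. mono x \<and> mono y \<and> (\<exists>s. is_lub (range (\<lambda>n. x n + y n)) s)
        \<longrightarrow> (\<exists>s. is_lub (range x) s) \<and> (\<exists>s. is_lub (range y) s))"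

definition sublattice :: "'v::lattice set \<Rightarrow> bool" where
  "sublattice L \<longleftrightarrow> (\<forall>a\<in>L. \<forall>b\<in>L. inf a b \<in> L \<and> sup a b \<in> L)"

definition valuation :: "'v::lattice set \<Rightarrow> ('v \<Rightarrow> 'e::ordered_ab_group_add) \<Rightarrow> bool" where
  "valuation L \<phi> \<longleftrightarrow> sublattice L \<and>
     (\<forall>a\<in>L. \<forall>b\<in>L. a \<le> b \<longrightarrow> \<phi> a \<le> \<phi> b) \<and>
     (\<forall>a\<in>L. \<forall>b\<in>L. \<phi> (inf a b) + \<phi> (sup a b) = \<phi> a + \<phi> b)"

definition valuation_system :: "'v::lattice set \<Rightarrow> ('v \<Rightarrow> 'e::ordered_ab_group_add) \<Rightarrow> bool" where
  "valuation_system L \<phi> \<longleftrightarrow>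
     sigma_distributive TYPE('v) \<and> sublattice L \<and> R_complete TYPE('e) \<and> valuation L \<phi>"

definition extends :: "'v set \<Rightarrow> ('v \<Rightarrow> 'e) \<Rightarrow> 'v set \<Rightarrow> ('v \<Rightarrow> 'e) \<Rightarrow> bool" where
  "extends C \<psi> L \<phi> \<longleftrightarrow> L \<subseteq> C \<and> (\<forall>x\<in>L. \<psi> x = \<phi> x)"

definition phi_conv_dec :: "'v::lattice set \<Rightarrow> ('v \<Rightarrow> 'e::ordered_ab_group_add) \<Rightarrow> (nat \<Rightarrow> 'v) \<Rightarrow> bool" where
  "phi_conv_dec L \<phi> a \<longleftrightarrow> (\<forall>n. a n \<in> L) \<and> antimono a \<and>
     (\<exists>x. is_glb (range a) x) \<and> (\<exists>s. is_glb (range (\<lambda>n. \<phi> (a n))) s)"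

definition phi_conv_inc :: "'v::lattice set \<Rightarrow> ('v \<Rightarrow> 'e::ordered_ab_group_add) \<Rightarrow> (nat \<Rightarrow> 'v) \<Rightarrow> bool" where
  "phi_conv_inc L \<phi> a \<longleftrightarrow> (\<forall>n. a n \<in> L) \<and> mono a \<and>
     (\<exists>x. is_lub (range a) x) \<and> (\<exists>s. is_lub (range (\<lambda>n. \<phi> (a n))) s)"

definition PiL :: "'v::lattice set \<Rightarrow> ('v \<Rightarrow> 'e::ordered_ab_group_add) \<Rightarrow> 'v set" where
  "PiL L \<phi> = {x. \<exists>a. phi_conv_dec L \<phi> a \<and> is_glb (range a) x}"

definition SigmaL :: "'v::lattice set \<Rightarrow> ('v \<Rightarrow> 'e::ordered_ab_group_add) \<Rightarrow> 'v set" where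
  "SigmaL L \<phi> = {x. \<exists>a. phi_conv_inc L \<phi> a \<and> is_lub (range a) x}"

definition Pi_extendible :: "'v::lattice set \<Rightarrow> ('v \<Rightarrow> 'e::ordered_ab_group_add) \<Rightarrow> bool" where
  "Pi_extendible L \<phi> \<longleftrightarrow> (\<exists>f. valuation (PiL L \<phi>) f \<and>
     (\<forall>a x s. phi_conv_dec L \<phi> a \<and> is_glb (range a) x \<and> is_glb (range (\<lambda>n. \<phi> (a n))) s
        \<longrightarrow> f x = s))"

definition Sigma_extendible :: "'v::lattice set \<Rightarrow> ('v \<Rightarrow> 'e::ordered_ab_group_add) \<Rightarrow> bool" where
  "Sigma_extendible L \<phi> \<longleftrightarrow> (\<exists>f. valuation (SigmaL L \<phi>) f \<and>
     (\<forall>a x s. phi_conv_inc L \<phi> a \<and> is_lub (range a) x \<and> is_lub (range (\<lambda>n. \<phi> (a n))) s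
        \<longrightarrow> f x = s))"

text \<open>The extension itself (meaningful on PiL L phi when phi is Pi-extendible).\<close>
definition Pi_fun :: "'v::lattice set \<Rightarrow> ('v \<Rightarrow> 'e::ordered_ab_group_add) \<Rightarrow> 'v \<Rightarrow> 'e" where
  "Pi_fun L \<phi> x = (SOME s. \<exists>a. phi_conv_dec L \<phi> a \<and> is_glb (range a) x \<and>
                               is_glb (range (\<lambda>n. \<phi> (a n))) s)"

definition Sigma_fun :: "'v::lattice set \<Rightarrow> ('v \<Rightarrow> 'e::ordered_ab_group_add) \<Rightarrow> 'v \<Rightarrow> 'e" where
  "Sigma_fun L \<phi> x = (SOME s. \<exists>a. phi_conv_inc L \<phi> a \<and> is_lub (range a) x \<and>
                                  is_lub (range (\<lambda>n. \<phi> (a n))) s)"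

definition step_ext :: "bool \<Rightarrow> 'v::lattice set \<Rightarrow> ('v \<Rightarrow> 'e::ordered_ab_group_add) \<Rightarrow> bool" where
  "step_ext b M f = (if b then Pi_extendible M f else Sigma_extendible M f)"

definition step_dom :: "bool \<Rightarrow> 'v::lattice set \<Rightarrow> ('v \<Rightarrow> 'e::ordered_ab_group_add) \<Rightarrow> 'v set" where
  "step_dom b M f = (if b then PiL M f else SigmaL M f)"

definition step_fun :: "bool \<Rightarrow> 'v::lattice set \<Rightarrow> ('v \<Rightarrow> 'e::ordered_ab_group_add) \<Rightarrow> 'v \<Rightarrow> 'e" where
  "step_fun b M f = (if b then Pi_fun M f else Sigma_fun M f)"

section \<open>Ordinals, represented as elements of a well-ordered type\<close>

definition is_zero :: "'o::wellorder \<Rightarrow> bool" where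
  "is_zero \<alpha> \<longleftrightarrow> (\<forall>\<gamma>. \<alpha> \<le> \<gamma>)"

definition is_succ_of :: "'o::wellorder \<Rightarrow> 'o \<Rightarrow> bool" where
  "is_succ_of \<beta> \<alpha> \<longleftrightarrow> \<beta> < \<alpha> \<and> (\<forall>\<gamma>. \<beta> < \<gamma> \<longrightarrow> \<alpha> \<le> \<gamma>)"

definition is_limit :: "'o::wellorder \<Rightarrow> bool" where
  "is_limit \<alpha> \<longleftrightarrow> \<not> is_zero \<alpha> \<and> \<not> (\<exists>\<beta>. is_succ_of \<beta> \<alpha>)"

text \<open>hier L phi b alpha M f: phi is Pi_alpha-extendible (b = True) resp. Sigma_alpha-extendible
  (b = False), with Pi_alpha L = M (resp. Sigma_alpha L = M) and Pi_alpha phi = f on M.\<close>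
inductive hier :: "'v::lattice set \<Rightarrow> ('v \<Rightarrow> 'e::ordered_ab_group_add) \<Rightarrow> bool \<Rightarrow> 'o::wellorder
                    \<Rightarrow> 'v set \<Rightarrow> ('v \<Rightarrow> 'e) \<Rightarrow> bool"
  for L :: "'v::lattice set" and \<phi> :: "'v \<Rightarrow> 'e::ordered_ab_group_add"
where
  zero: "is_zero \<alpha> \<Longrightarrow> hier L \<phi> b \<alpha> L \<phi>"
| succ: "is_succ_of \<beta> \<alpha> \<Longrightarrow> hier L \<phi> (\<not> b) \<beta> M f \<Longrightarrow> step_ext b M f \<Longrightarrow>
         hier L \<phi> b \<alpha> (step_dom b M f) (step_fun b M f)"
| limit: "is_limit \<alpha> \<Longrightarrow> (\<forall>\<beta><\<alpha>. hier L \<phi> b \<beta> (Ms \<beta>) (fs \<beta>)) \<Longrightarrow>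
          M = (\<Union>\<beta>\<in>{\<beta>. \<beta> < \<alpha>}. Ms \<beta>) \<Longrightarrow>
          (\<forall>\<beta><\<alpha>. \<forall>x\<in>Ms \<beta>. f x = fs \<beta> x) \<Longrightarrow> hier L \<phi> b \<alpha> M f"

definition Pi_alpha_extendible :: "'v::lattice set \<Rightarrow> ('v \<Rightarrow> 'e::ordered_ab_group_add) \<Rightarrow> 'o::wellorder \<Rightarrow> bool" where
  "Pi_alpha_extendible L \<phi> \<alpha> \<longleftrightarrow> (\<exists>M f. hier L \<phi> True \<alpha> M f)"

definition Sigma_alpha_extendible :: "'v::lattice set \<Rightarrow> ('v \<Rightarrow> 'e::ordered_ab_group_add) \<Rightarrow> 'o::wellorder \<Rightarrow> bool" where
  "Sigma_alpha_extendible L \<phi> \<alpha> \<longleftrightarrow> (\<exists>M f. hier L \<phi> False \<alpha> M f)"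

end

theory Submission
  imports Defs
begin

text \<open>
  Induction on \<open>\<alpha>\<close>, for \<open>\<Pi>\<close> and \<open>\<Sigma>\<close> at once. That \<open>\<Pi>\<^sub>\<alpha>\<psi>\<close> extends \<open>\<Pi>\<^sub>\<alpha>\<phi>\<close>
  needs no completeness: a \<open>\<phi>\<close>-convergent sequence is \<open>\<psi>\<close>-convergent with the same
  values, so each \<open>\<Pi>\<close>- or \<open>\<Sigma>\<close>-step, and each union at a limit stage, preserves
  extension. For extendibility at a successor, the valuation \<open>\<Pi>(\<Sigma>\<^sub>\<beta>\<psi>)\<close> restricts to
  the domain of \<open>\<Pi>(\<Sigma>\<^sub>\<beta>\<phi>)\<close>, and the only point is that this domain is a
  sublattice. For the infima of \<open>a\<^sub>n \<squnion> b\<^sub>n\<close> and \<open>a\<^sub>n \<sqinter> b\<^sub>n\<close> this is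
  \<open>\<sigma>\<close>-distributivity; for the infima of their values, modularity gives
  \<open>\<phi>(a\<^sub>n \<squnion> b\<^sub>n) + \<phi>(a\<^sub>n \<sqinter> b\<^sub>n) = \<phi>(a\<^sub>n) + \<phi>(b\<^sub>n)\<close>, whose infimum
  exists, and R-completeness splits it. Finally, the hierarchy increases with \<open>\<alpha>\<close>, so the
  unions at limit stages are directed and remain sublattices.
\<close>

subsection \<open>Infima and suprema of sequences\<close>

lemma is_glb_singleton: "is_glb {c} c"
  unfolding is_glb_def by auto

lemma is_lub_singleton: "is_lub {c} c"
  unfolding is_lub_def by auto

lemma is_glb_inf_seq:
  assumes "is_glb (range a) x" and "is_glb (range b) (y::'v::lattice)"
  shows "is_glb (range (\<lambda>n. inf (a n) (b n))) (inf x y)"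
  using assms unfolding is_glb_def by (auto intro: inf_mono le_infI1 le_infI2)

lemma is_lub_sup_seq:
  assumes "is_lub (range a) x" and "is_lub (range b) (y::'v::lattice)"
  shows "is_lub (range (\<lambda>n. sup (a n) (b n))) (sup x y)"
  using assms unfolding is_lub_def by (auto intro: sup_mono le_supI1 le_supI2)

lemma is_glb_sup_seq:
  assumes sd: "sigma_distributive TYPE('v::lattice)"
    and anti: "antimono (a::nat \<Rightarrow> 'v)" "antimono b"
    and glb: "is_glb (range a) x" "is_glb (range b) (y::'v)"
  shows "is_glb (range (\<lambda>n. sup (a n) (b n))) (sup x y)"
  unfolding is_glb_def
proof safe
  fix n show "sup x y \<le> sup (a n) (b n)"
    using glb unfolding is_glb_def by (blast intro: sup_mono)
next
  fix z assume lower: "\<forall>w\<in>range (\<lambda>n. sup (a n) (b n)). z \<le> w"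
  have dist: "is_glb (range (\<lambda>n. sup c (d n))) (sup c w)"
    if "is_glb (range d) w" for c w and d :: "nat \<Rightarrow> 'v"
    using sd that unfolding sigma_distributive_def by blast
  have "z \<le> sup (a m) (b n)" for m n
  proof -
    have "z \<le> sup (a (max m n)) (b (max m n))" using lower by auto
    also have "\<dots> \<le> sup (a m) (b n)"
      by (intro sup_mono antimonoD[OF anti(1)] antimonoD[OF anti(2)]) simp_all
    finally show ?thesis .
  qed
  then have "z \<le> sup y (a m)" for m
    using dist[OF glb(2), of "a m"] unfolding is_glb_def by (auto simp: sup_commute)
  then show "z \<le> sup x y"
    using dist[OF glb(1), of y] unfolding is_glb_def by (auto simp: sup_commute)
qed

lemma is_lub_inf_seq:
  assumes sd: "sigma_distributive TYPE('v::lattice)"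
    and mono: "mono (a::nat \<Rightarrow> 'v)" "mono b"
    and lub: "is_lub (range a) x" "is_lub (range b) (y::'v)"
  shows "is_lub (range (\<lambda>n. inf (a n) (b n))) (inf x y)"
  unfolding is_lub_def
proof safe
  fix n show "inf (a n) (b n) \<le> inf x y"
    using lub unfolding is_lub_def by (blast intro: inf_mono)
next
  fix z assume upper: "\<forall>w\<in>range (\<lambda>n. inf (a n) (b n)). w \<le> z"
  have dist: "is_lub (range (\<lambda>n. inf c (d n))) (inf c w)"
    if "is_lub (range d) w" for c w and d :: "nat \<Rightarrow> 'v"
    using sd that unfolding sigma_distributive_def by blast
  have "inf (a m) (b n) \<le> z" for m n
  proof -
    have "inf (a m) (b n) \<le> inf (a (max m n)) (b (max m n))"
      by (intro inf_mono monoD[OF mono(1)] monoD[OF mono(2)]) simp_all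
    also have "\<dots> \<le> z" using upper by auto
    finally show ?thesis .
  qed
  then have "inf y (a m) \<le> z" for m
    using dist[OF lub(2), of "a m"] unfolding is_lub_def by (auto simp: inf_commute)
  then show "inf x y \<le> z"
    using dist[OF lub(1), of y] unfolding is_lub_def by (auto simp: inf_commute)
qed

lemma is_glb_add:
  fixes u v :: "nat \<Rightarrow> 'e::ordered_ab_group_add"
  assumes anti: "antimono u" "antimono v" and glb: "is_glb (range u) s" "is_glb (range v) t"
  shows "is_glb (range (\<lambda>n. u n + v n)) (s + t)"
  unfolding is_glb_def
proof safe
  fix n show "s + t \<le> u n + v n"
    using glb unfolding is_glb_def by (auto intro: add_mono)
next
  fix z assume lower: "\<forall>w\<in>range (\<lambda>n. u n + v n). z \<le> w"
  have "z - v n \<le> u m" for m n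
  proof -
    have "z \<le> u (max m n) + v (max m n)" using lower by auto
    also have "\<dots> \<le> u m + v n"
      using anti unfolding antimono_def by (auto intro: add_mono)
    finally show ?thesis by (simp add: diff_le_eq)
  qed
  then have "z - s \<le> v n" for n
    using glb(1) unfolding is_glb_def by (metis diff_le_eq add.commute rangeE)
  then have "z - s \<le> t"
    using glb(2) unfolding is_glb_def by blast
  then show "z \<le> s + t" by (simp add: diff_le_eq add.commute)
qed

lemma is_lub_iff_is_glb_uminus:
  fixes u :: "nat \<Rightarrow> 'e::ordered_ab_group_add"
  shows "is_lub (range u) s \<longleftrightarrow> is_glb (range (\<lambda>n. - u n)) (- s)"
proof -
  have "(\<forall>z. (\<forall>n. z \<le> - u n) \<longrightarrow> z \<le> - s) \<longleftrightarrow> (\<forall>z. (\<forall>n. - z \<le> - u n) \<longrightarrow> - z \<le> - s)"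
    by (metis minus_minus)
  then show ?thesis
    unfolding is_glb_def is_lub_def by simp
qed

lemma is_lub_add:
  fixes u v :: "nat \<Rightarrow> 'e::ordered_ab_group_add"
  assumes "mono u" "mono v" and "is_lub (range u) s" "is_lub (range v) t"
  shows "is_lub (range (\<lambda>n. u n + v n)) (s + t)"
proof -
  have "antimono (\<lambda>n. - u n)" "antimono (\<lambda>n. - v n)"
    using assms(1,2) unfolding mono_def antimono_def by auto
  from is_glb_add[OF this assms(3,4)[unfolded is_lub_iff_is_glb_uminus]]
  show ?thesis by (simp add: is_lub_iff_is_glb_uminus)
qed

lemma R_complete_glb_summands:
  fixes x y x' y' :: "nat \<Rightarrow> 'e::ordered_ab_group_add"
  assumes rc: "R_complete TYPE('e)"
    and anti: "antimono x" "antimono y" "antimono x'" "antimono y'"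
    and sum: "\<And>n. x n + y n = x' n + y' n"
    and glb: "is_glb (range x') s" "is_glb (range y') t"
  shows "(\<exists>s. is_glb (range x) s) \<and> (\<exists>s. is_glb (range y) s)"
proof -
  have "is_glb (range (\<lambda>n. x n + y n)) (s + t)"
    using is_glb_add[OF anti(3,4) glb] by (simp add: sum)
  then show ?thesis using rc anti(1,2) unfolding R_complete_def by blast
qed

lemma R_complete_lub_summands:
  fixes x y x' y' :: "nat \<Rightarrow> 'e::ordered_ab_group_add"
  assumes rc: "R_complete TYPE('e)"
    and mono: "mono x" "mono y" "mono x'" "mono y'"
    and sum: "\<And>n. x n + y n = x' n + y' n"
    and lub: "is_lub (range x') s" "is_lub (range y') t"
  shows "(\<exists>s. is_lub (range x) s) \<and> (\<exists>s. is_lub (range y) s)"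
proof -
  have "is_lub (range (\<lambda>n. x n + y n)) (s + t)"
    using is_lub_add[OF mono(3,4) lub] by (simp add: sum)
  then show ?thesis using rc mono(1,2) unfolding R_complete_def by blast
qed

lemma antimono_sup_inf_seq:
  assumes "antimono (a::nat \<Rightarrow> 'v::lattice)" "antimono b"
  shows "antimono (\<lambda>n. sup (a n) (b n))" "antimono (\<lambda>n. inf (a n) (b n))"
  using assms unfolding antimono_def by (blast intro: sup_mono inf_mono)+

lemma mono_sup_inf_seq:
  assumes "mono (a::nat \<Rightarrow> 'v::lattice)" "mono b"
  shows "mono (\<lambda>n. sup (a n) (b n))" "mono (\<lambda>n. inf (a n) (b n))"
  using assms unfolding mono_def by (blast intro: sup_mono inf_mono)+

subsection \<open>Valuations and the domains \<open>\<Pi>L\<close>, \<open>\<Sigma>L\<close>\<close>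

lemma valuation_antimono_comp:
  "valuation N g \<Longrightarrow> \<forall>n. a n \<in> N \<Longrightarrow> antimono a \<Longrightarrow> antimono (\<lambda>n. g (a n))"
  unfolding valuation_def antimono_def by blast

lemma valuation_mono_comp:
  "valuation N g \<Longrightarrow> \<forall>n. a n \<in> N \<Longrightarrow> mono a \<Longrightarrow> mono (\<lambda>n. g (a n))"
  unfolding valuation_def mono_def by blast

lemma valuation_cong: "valuation M f \<Longrightarrow> \<forall>x\<in>M. g x = f x \<Longrightarrow> valuation M g"
  unfolding valuation_def sublattice_def by auto

lemma valuation_subset: "valuation M f \<Longrightarrow> sublattice N \<Longrightarrow> N \<subseteq> M \<Longrightarrow> valuation N f"
  unfolding valuation_def by blast

lemma extends_refl: "extends M f M f"
  unfolding extends_def by simp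

lemma extends_trans: "extends M f N g \<Longrightarrow> extends N g K h \<Longrightarrow> extends M f K h"
  unfolding extends_def by auto

lemma valuation_directed_Union:
  assumes val: "\<forall>i\<in>I. valuation (Ms i) (fs i)"
    and ext: "\<forall>i\<in>I. extends M f (Ms i) (fs i)"
    and M: "M = (\<Union>i\<in>I. Ms i)"
    and directed: "\<forall>i\<in>I. \<forall>j\<in>I. \<exists>k\<in>I. Ms i \<union> Ms j \<subseteq> Ms k"
  shows "valuation M f"
  unfolding valuation_def sublattice_def
proof (intro conjI ballI impI)
  fix x y assume "x \<in> M" "y \<in> M"
  then obtain k where k: "k \<in> I" "x \<in> Ms k" "y \<in> Ms k"
    using M directed by blast
  have "valuation (Ms k) f" and sub: "Ms k \<subseteq> M"
    using valuation_cong val ext k(1) unfolding extends_def by blast+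
  then have "inf x y \<in> Ms k" "sup x y \<in> Ms k" "x \<le> y \<Longrightarrow> f x \<le> f y"
    "f (inf x y) + f (sup x y) = f x + f y"
    using k unfolding valuation_def sublattice_def by blast+
  then show "inf x y \<in> M" "sup x y \<in> M" "x \<le> y \<Longrightarrow> f x \<le> f y"
    "f (inf x y) + f (sup x y) = f x + f y"
    using sub by blast+
qed

lemma PiL_sublattice:
  fixes N :: "'v::lattice set" and g :: "'v \<Rightarrow> 'e::ordered_ab_group_add"
  assumes sd: "sigma_distributive TYPE('v)" and rc: "R_complete TYPE('e)"
    and val: "valuation N g"
  shows "sublattice (PiL N g)"
  unfolding sublattice_def
proof (intro ballI conjI)
  fix x y assume "x \<in> PiL N g" "y \<in> PiL N g"
  then obtain a b :: "nat \<Rightarrow> 'v" and s t where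
      a: "\<forall>n. a n \<in> N" "antimono a" "is_glb (range a) x" "is_glb (range (\<lambda>n. g (a n))) s"
    and b: "\<forall>n. b n \<in> N" "antimono b" "is_glb (range b) y" "is_glb (range (\<lambda>n. g (b n))) t"
    unfolding PiL_def phi_conv_dec_def by auto
  define c where "c n = sup (a n) (b n)" for n
  define d where "d n = inf (a n) (b n)" for n
  have cd_in: "\<forall>n. c n \<in> N" "\<forall>n. d n \<in> N"
    using val a(1) b(1) unfolding valuation_def sublattice_def c_def d_def by auto
  have cd_anti: "antimono c" "antimono d"
    unfolding c_def d_def using antimono_sup_inf_seq[OF a(2) b(2)] by simp_all
  have modular: "g (d n) + g (c n) = g (a n) + g (b n)" for n
    using val a(1) b(1) unfolding valuation_def c_def d_def by blast
  have "(\<exists>s. is_glb (range (\<lambda>n. g (d n))) s) \<and> (\<exists>s. is_glb (range (\<lambda>n. g (c n))) s)"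
    using R_complete_glb_summands[OF rc _ _ _ _ modular a(4) b(4)]
      valuation_antimono_comp[OF val] cd_in cd_anti a b by blast
  moreover have "is_glb (range c) (sup x y)" "is_glb (range d) (inf x y)"
    unfolding c_def d_def
    by (rule is_glb_sup_seq[OF sd a(2) b(2) a(3) b(3)] is_glb_inf_seq[OF a(3) b(3)])+
  ultimately show "inf x y \<in> PiL N g" "sup x y \<in> PiL N g"
    unfolding PiL_def phi_conv_dec_def using cd_in cd_anti by blast+
qed

lemma SigmaL_sublattice:
  fixes N :: "'v::lattice set" and g :: "'v \<Rightarrow> 'e::ordered_ab_group_add"
  assumes sd: "sigma_distributive TYPE('v)" and rc: "R_complete TYPE('e)"
    and val: "valuation N g"
  shows "sublattice (SigmaL N g)"
  unfolding sublattice_def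
proof (intro ballI conjI)
  fix x y assume "x \<in> SigmaL N g" "y \<in> SigmaL N g"
  then obtain a b :: "nat \<Rightarrow> 'v" and s t where
      a: "\<forall>n. a n \<in> N" "mono a" "is_lub (range a) x" "is_lub (range (\<lambda>n. g (a n))) s"
    and b: "\<forall>n. b n \<in> N" "mono b" "is_lub (range b) y" "is_lub (range (\<lambda>n. g (b n))) t"
    unfolding SigmaL_def phi_conv_inc_def by auto
  define c where "c n = sup (a n) (b n)" for n
  define d where "d n = inf (a n) (b n)" for n
  have cd_in: "\<forall>n. c n \<in> N" "\<forall>n. d n \<in> N"
    using val a(1) b(1) unfolding valuation_def sublattice_def c_def d_def by auto
  have cd_mono: "mono c" "mono d"
    unfolding c_def d_def using mono_sup_inf_seq[OF a(2) b(2)] by simp_all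
  have modular: "g (d n) + g (c n) = g (a n) + g (b n)" for n
    using val a(1) b(1) unfolding valuation_def c_def d_def by blast
  have "(\<exists>s. is_lub (range (\<lambda>n. g (d n))) s) \<and> (\<exists>s. is_lub (range (\<lambda>n. g (c n))) s)"
    using R_complete_lub_summands[OF rc _ _ _ _ modular a(4) b(4)]
      valuation_mono_comp[OF val] cd_in cd_mono a b by blast
  moreover have "is_lub (range c) (sup x y)" "is_lub (range d) (inf x y)"
    unfolding c_def d_def
    by (rule is_lub_sup_seq[OF a(3) b(3)] is_lub_inf_seq[OF sd a(2) b(2) a(3) b(3)])+
  ultimately show "inf x y \<in> SigmaL N g" "sup x y \<in> SigmaL N g"
    unfolding SigmaL_def phi_conv_inc_def using cd_in cd_mono by blast+
qed

lemma step_dom_sublattice: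
  fixes M :: "'v::lattice set" and f :: "'v \<Rightarrow> 'e::ordered_ab_group_add"
  assumes "sigma_distributive TYPE('v)" "R_complete TYPE('e)" "valuation M f"
  shows "sublattice (step_dom b M f)"
  using PiL_sublattice[OF assms] SigmaL_sublattice[OF assms] unfolding step_dom_def by simp

subsection \<open>One \<open>\<Pi>\<close>- or \<open>\<Sigma>\<close>-step\<close>

definition step_conv ::
    "bool \<Rightarrow> 'v::lattice set \<Rightarrow> ('v \<Rightarrow> 'e::ordered_ab_group_add) \<Rightarrow> (nat \<Rightarrow> 'v) \<Rightarrow> 'v \<Rightarrow> 'e \<Rightarrow> bool"
  where "step_conv b M f a x s \<longleftrightarrow>
    (if b then phi_conv_dec M f a \<and> is_glb (range a) x \<and> is_glb (range (\<lambda>n. f (a n))) s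
     else phi_conv_inc M f a \<and> is_lub (range a) x \<and> is_lub (range (\<lambda>n. f (a n))) s)"

lemma step_dom_iff: "x \<in> step_dom b M f \<longleftrightarrow> (\<exists>a s. step_conv b M f a x s)"
  unfolding step_dom_def step_conv_def PiL_def SigmaL_def phi_conv_dec_def phi_conv_inc_def
  by auto

lemma step_ext_iff:
  "step_ext b M f \<longleftrightarrow>
    (\<exists>F. valuation (step_dom b M f) F \<and> (\<forall>a x s. step_conv b M f a x s \<longrightarrow> F x = s))"
  unfolding step_ext_def step_dom_def step_conv_def Pi_extendible_def Sigma_extendible_def
  by auto

lemma step_fun_eq_Eps: "step_fun b M f x = (SOME s. \<exists>a. step_conv b M f a x s)"
  unfolding step_fun_def step_conv_def Pi_fun_def Sigma_fun_def by simp

lemma step_fun_conv: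
  assumes "step_ext b M f" "step_conv b M f a x s"
  shows "step_fun b M f x = s"
proof -
  obtain F where F: "\<forall>a x s. step_conv b M f a x s \<longrightarrow> F x = s"
    using assms(1) unfolding step_ext_iff by blast
  have "\<exists>a. step_conv b M f a x (step_fun b M f x)"
    unfolding step_fun_eq_Eps by (rule someI_ex) (use assms(2) in blast)
  then show ?thesis using F assms(2) by metis
qed

lemma step_conv_const: "x \<in> M \<Longrightarrow> step_conv b M f (\<lambda>n. x) x (f x)"
  unfolding step_conv_def phi_conv_dec_def phi_conv_inc_def
  by (auto simp: antimono_def mono_def intro: is_glb_singleton is_lub_singleton)

lemma step_conv_extends: "extends M f N g \<Longrightarrow> step_conv b N g a x s \<Longrightarrow> step_conv b M f a x s"
  unfolding extends_def step_conv_def phi_conv_dec_def phi_conv_inc_def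
  by (cases b) (auto cong: image_cong)

lemma valuation_step_fun: "step_ext b M f \<Longrightarrow> valuation (step_dom b M f) (step_fun b M f)"
  by (metis step_ext_iff step_dom_iff step_fun_conv valuation_cong)

lemma extends_step: "step_ext b M f \<Longrightarrow> extends (step_dom b M f) (step_fun b M f) M f"
  unfolding extends_def by (metis step_conv_const step_dom_iff step_fun_conv subsetI)

lemma extends_step_mono:
  assumes "step_ext b M f" "step_ext b N g" "extends M f N g"
  shows "extends (step_dom b M f) (step_fun b M f) (step_dom b N g) (step_fun b N g)"
  unfolding extends_def
  by (metis assms step_conv_extends step_dom_iff step_fun_conv subsetI)

lemma step_ext_restrict:
  fixes N :: "'v::lattice set" and g :: "'v \<Rightarrow> 'e::ordered_ab_group_add"
  assumes sd: "sigma_distributive TYPE('v)" and rc: "R_complete TYPE('e)"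
    and ext: "step_ext b M f" and MN: "extends M f N g" and val: "valuation N g"
  shows "step_ext b N g"
proof -
  obtain F where F: "valuation (step_dom b M f) F" "\<forall>a x s. step_conv b M f a x s \<longrightarrow> F x = s"
    using ext unfolding step_ext_iff by blast
  have "step_dom b N g \<subseteq> step_dom b M f"
    using step_conv_extends[OF MN] by (meson step_dom_iff subsetI)
  then have "valuation (step_dom b N g) F"
    using valuation_subset[OF F(1) step_dom_sublattice[OF sd rc val]] by blast
  then show ?thesis
    unfolding step_ext_iff using F(2) step_conv_extends[OF MN] by blast
qed

subsection \<open>The hierarchy\<close>

lemma ordinal_cases:
  fixes \<alpha> :: "'o::wellorder"
  obtains (zero) "is_zero \<alpha>" | (succ) \<beta> where "is_succ_of \<beta> \<alpha>" | (limit) "is_limit \<alpha>"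
  unfolding is_limit_def by blast

lemma is_zero_not_less: "is_zero \<alpha> \<Longrightarrow> \<not> \<beta> < (\<alpha>::'o::wellorder)"
  unfolding is_zero_def by (simp add: not_less)

lemma is_succ_of_less: "is_succ_of \<beta> \<alpha> \<Longrightarrow> \<beta> < \<alpha>"
  unfolding is_succ_of_def by simp

lemma is_succ_of_unique: "is_succ_of \<beta> \<alpha> \<Longrightarrow> is_succ_of \<beta>' \<alpha> \<Longrightarrow> \<beta> = (\<beta>'::'o::wellorder)"
  unfolding is_succ_of_def by (metis linorder_neqE not_le)

lemma less_succ_imp_le: "is_succ_of \<delta> \<gamma> \<Longrightarrow> \<beta> < \<gamma> \<Longrightarrow> \<beta> \<le> (\<delta>::'o::wellorder)"
  unfolding is_succ_of_def by (meson not_le)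

lemma limit_succ_less:
  fixes \<beta> \<gamma> :: "'o::wellorder"
  assumes "is_limit \<gamma>" "\<beta> < \<gamma>"
  obtains \<delta> where "is_succ_of \<beta> \<delta>" "\<delta> < \<gamma>"
proof -
  define \<delta> where "\<delta> = (LEAST \<delta>. \<beta> < \<delta>)"
  have "is_succ_of \<beta> \<delta>"
    unfolding is_succ_of_def \<delta>_def using assms(2) by (auto intro: LeastI Least_le)
  moreover have "\<delta> \<le> \<gamma>"
    unfolding \<delta>_def using assms(2) by (rule Least_le)
  ultimately show thesis
    using that assms(1) unfolding is_limit_def by (metis order.not_eq_order_implies_strict)
qed

lemma hier_zeroD: "hier L \<phi> b \<alpha> M f \<Longrightarrow> is_zero \<alpha> \<Longrightarrow> M = L \<and> f = \<phi>"
  by (erule hier.cases) (auto simp: is_zero_not_less is_succ_of_def is_limit_def)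

lemma hier_succE:
  assumes "hier L \<phi> b \<alpha> M f" "is_succ_of \<delta> \<alpha>"
  obtains M0 f0 where "hier L \<phi> (\<not> b) \<delta> M0 f0" "step_ext b M0 f0"
    "M = step_dom b M0 f0" "f = step_fun b M0 f0"
  using assms
  by (cases rule: hier.cases)
    (auto simp: is_limit_def dest: is_succ_of_unique is_succ_of_less is_zero_not_less)

lemma hier_limitE:
  assumes "hier L \<phi> b \<alpha> M f" "is_limit \<alpha>"
  obtains Ms fs where "\<forall>\<beta><\<alpha>. hier L \<phi> b \<beta> (Ms \<beta>) (fs \<beta>)" "M = (\<Union>\<beta>\<in>{\<beta>. \<beta> < \<alpha>}. Ms \<beta>)"
    "\<forall>\<beta><\<alpha>. extends M f (Ms \<beta>) (fs \<beta>)"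
  using assms by (cases rule: hier.cases) (auto simp: is_limit_def extends_def intro!: that)

lemma hier_extends:
  fixes \<alpha> :: "'o::wellorder"
  assumes "extends C \<psi> L \<phi>"
  shows "hier C \<psi> b \<alpha> M f \<Longrightarrow> hier L \<phi> b \<alpha> N g \<Longrightarrow> extends M f N g"
proof (induction \<alpha> arbitrary: b M f N g rule: less_induct)
  case (less \<alpha>)
  show ?case
  proof (cases \<alpha> rule: ordinal_cases)
    case zero
    then show ?thesis using assms hier_zeroD less.prems by metis
  next
    case (succ \<delta>)
    obtain M0 f0 where M0: "hier C \<psi> (\<not> b) \<delta> M0 f0" "step_ext b M0 f0"
      "M = step_dom b M0 f0" "f = step_fun b M0 f0"
      using hier_succE[OF less.prems(1) succ] .
    obtain N0 g0 where N0: "hier L \<phi> (\<not> b) \<delta> N0 g0" "step_ext b N0 g0"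
      "N = step_dom b N0 g0" "g = step_fun b N0 g0"
      using hier_succE[OF less.prems(2) succ] .
    have "extends M0 f0 N0 g0"
      using less.IH[OF is_succ_of_less[OF succ] M0(1) N0(1)] .
    then show ?thesis using extends_step_mono M0 N0 by simp
  next
    case limit
    obtain Ms fs where Ms: "\<forall>\<beta><\<alpha>. hier C \<psi> b \<beta> (Ms \<beta>) (fs \<beta>)"
      "\<forall>\<beta><\<alpha>. extends M f (Ms \<beta>) (fs \<beta>)"
      using hier_limitE[OF less.prems(1) limit] by metis
    obtain Ns gs where Ns: "\<forall>\<beta><\<alpha>. hier L \<phi> b \<beta> (Ns \<beta>) (gs \<beta>)"
      "N = (\<Union>\<beta>\<in>{\<beta>. \<beta> < \<alpha>}. Ns \<beta>)" "\<forall>\<beta><\<alpha>. extends N g (Ns \<beta>) (gs \<beta>)"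
      using hier_limitE[OF less.prems(2) limit] by metis
    have "extends (Ms \<beta>) (fs \<beta>) (Ns \<beta>) (gs \<beta>)" if "\<beta> < \<alpha>" for \<beta>
      using less.IH[OF that] Ms(1) Ns(1) that by blast
    then show ?thesis using Ms(2) Ns(2,3) unfolding extends_def by fastforce
  qed
qed

lemma hier_extends_succ:
  fixes \<beta> \<gamma> :: "'o::wellorder"
  shows "is_succ_of \<beta> \<gamma> \<Longrightarrow> hier L \<phi> b \<beta> M f \<Longrightarrow> hier L \<phi> b' \<gamma> M' f' \<Longrightarrow> extends M' f' M f"
proof (induction \<beta> arbitrary: b b' \<gamma> M f M' f' rule: less_induct)
  case (less \<beta>)
  obtain M0 f0 where M0: "hier L \<phi> (\<not> b') \<beta> M0 f0" "step_ext b' M0 f0"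
    "M' = step_dom b' M0 f0" "f' = step_fun b' M0 f0"
    using hier_succE[OF less.prems(3,1)] .
  have M0_M': "extends M' f' M0 f0"
    using extends_step[OF M0(2)] M0(3,4) by simp
  \<comment> \<open>For \<open>b = b'\<close> we need \<open>M \<subseteq> M0\<close>, which compares \<open>\<Pi>\<^sub>\<beta>\<close> with \<open>\<Sigma>\<^sub>\<beta>\<close>; at a successor
    \<open>\<beta>\<close> these are incomparable, and both sides are compared one level lower instead.\<close>
  consider (other_side) "b = (\<not> b')" | (zero) "b = b'" "is_zero \<beta>"
    | (succ) \<epsilon> where "b = b'" "is_succ_of \<epsilon> \<beta>" | (limit) "b = b'" "is_limit \<beta>"
    using ordinal_cases by blast
  then show ?case
  proof cases
    case other_side
    then have "extends M0 f0 M f"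
      using hier_extends[OF extends_refl] M0(1) less.prems(2) by blast
    then show ?thesis using M0_M' extends_trans by blast
  next
    case zero
    then have "M0 = M \<and> f0 = f"
      using hier_zeroD M0(1) less.prems(2) by metis
    then show ?thesis using M0_M' by simp
  next
    case succ
    obtain N0 g0 where N0: "hier L \<phi> (\<not> b) \<epsilon> N0 g0" "step_ext b N0 g0"
      "M = step_dom b N0 g0" "f = step_fun b N0 g0"
      using hier_succE[OF less.prems(2) succ(2)] .
    have "extends M0 f0 N0 g0"
      using less.IH[OF is_succ_of_less[OF succ(2)] succ(2) N0(1)] M0(1) succ(1) by simp
    then show ?thesis using extends_step_mono M0 N0 succ(1) by simp
  next
    case limit
    obtain Ms fs where Ms: "\<forall>\<epsilon><\<beta>. hier L \<phi> b \<epsilon> (Ms \<epsilon>) (fs \<epsilon>)"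
      "M = (\<Union>\<epsilon>\<in>{\<epsilon>. \<epsilon> < \<beta>}. Ms \<epsilon>)" "\<forall>\<epsilon><\<beta>. extends M f (Ms \<epsilon>) (fs \<epsilon>)"
      using hier_limitE[OF less.prems(2) limit(2)] by metis
    obtain Ms0 fs0 where Ms0: "\<forall>\<epsilon><\<beta>. hier L \<phi> (\<not> b') \<epsilon> (Ms0 \<epsilon>) (fs0 \<epsilon>)"
      "\<forall>\<epsilon><\<beta>. extends M0 f0 (Ms0 \<epsilon>) (fs0 \<epsilon>)"
      using hier_limitE[OF M0(1) limit(2)] by metis
    have "extends M0 f0 (Ms \<epsilon>) (fs \<epsilon>)" if \<epsilon>: "\<epsilon> < \<beta>" for \<epsilon>
    proof -
      obtain \<epsilon>' where \<epsilon>': "is_succ_of \<epsilon> \<epsilon>'" "\<epsilon>' < \<beta>"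
        using limit_succ_less[OF limit(2) \<epsilon>] .
      have "extends (Ms0 \<epsilon>') (fs0 \<epsilon>') (Ms \<epsilon>) (fs \<epsilon>)"
        using less.IH[OF \<epsilon> \<epsilon>'(1)] Ms(1) Ms0(1) \<epsilon> \<epsilon>'(2) by blast
      then show ?thesis using Ms0(2) \<epsilon>'(2) extends_trans by blast
    qed
    then have "extends M0 f0 M f" using Ms(2,3) unfolding extends_def by fastforce
    then show ?thesis using M0_M' extends_trans by blast
  qed
qed

lemma hier_extends_less:
  fixes \<beta> \<gamma> :: "'o::wellorder"
  shows "\<beta> < \<gamma> \<Longrightarrow> hier L \<phi> b \<beta> M f \<Longrightarrow> hier L \<phi> b' \<gamma> M' f' \<Longrightarrow> extends M' f' M f"
proof (induction \<gamma> arbitrary: b' M' f' rule: less_induct)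
  case (less \<gamma>)
  show ?case
  proof (cases \<gamma> rule: ordinal_cases)
    case zero
    then show ?thesis using is_zero_not_less less.prems(1) by blast
  next
    case (succ \<delta>)
    show ?thesis
    proof (cases "\<beta> = \<delta>")
      case True
      then show ?thesis using hier_extends_succ succ less.prems(2,3) by blast
    next
      case False
      then have "\<beta> < \<delta>" using less_succ_imp_le[OF succ less.prems(1)] by simp
      obtain M0 f0 where M0: "hier L \<phi> (\<not> b') \<delta> M0 f0"
        using hier_succE[OF less.prems(3) succ] by metis
      have "extends M0 f0 M f"
        using less.IH[OF is_succ_of_less[OF succ] \<open>\<beta> < \<delta>\<close> less.prems(2) M0] .
      moreover have "extends M' f' M0 f0"
        using hier_extends_succ[OF succ M0 less.prems(3)] .
      ultimately show ?thesis using extends_trans by blast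
    qed
  next
    case limit
    obtain \<delta> where \<delta>: "is_succ_of \<beta> \<delta>" "\<delta> < \<gamma>"
      using limit_succ_less[OF limit less.prems(1)] .
    obtain Ms fs where Ms: "\<forall>\<delta><\<gamma>. hier L \<phi> b' \<delta> (Ms \<delta>) (fs \<delta>)"
      "\<forall>\<delta><\<gamma>. extends M' f' (Ms \<delta>) (fs \<delta>)"
      using hier_limitE[OF less.prems(3) limit] by metis
    have "extends (Ms \<delta>) (fs \<delta>) M f"
      using hier_extends_succ[OF \<delta>(1) less.prems(2)] Ms(1) \<delta>(2) by blast
    then show ?thesis using Ms(2) \<delta>(2) extends_trans by blast
  qed
qed

lemma hier_extends_le:
  fixes \<beta> \<gamma> :: "'o::wellorder"
  assumes "\<beta> \<le> \<gamma>" "hier L \<phi> b \<beta> M f" "hier L \<phi> b \<gamma> M' f'"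
  shows "extends M' f' M f"
  using assms hier_extends_less[OF _ assms(2,3)] hier_extends[OF extends_refl assms(3)]
  by (cases "\<beta> = \<gamma>") auto

lemma hier_valuation:
  fixes \<alpha> :: "'o::wellorder"
  assumes "valuation L \<phi>"
  shows "hier L \<phi> b \<alpha> M f \<Longrightarrow> valuation M f"
proof (induction rule: hier.induct)
  case zero
  from assms show ?case .
next
  case succ
  then show ?case using valuation_step_fun by blast
next
  case (limit \<alpha> b Ms fs M f)
  show ?case
  proof (rule valuation_directed_Union[where I = "{\<beta>. \<beta> < \<alpha>}" and Ms = Ms and fs = fs])
    show "\<forall>i\<in>{\<beta>. \<beta> < \<alpha>}. valuation (Ms i) (fs i)"
      and "\<forall>i\<in>{\<beta>. \<beta> < \<alpha>}. extends M f (Ms i) (fs i)"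
      and "M = (\<Union>i\<in>{\<beta>. \<beta> < \<alpha>}. Ms i)"
      using limit unfolding extends_def by auto
    show "\<forall>i\<in>{\<beta>. \<beta> < \<alpha>}. \<forall>j\<in>{\<beta>. \<beta> < \<alpha>}. \<exists>k\<in>{\<beta>. \<beta> < \<alpha>}. Ms i \<union> Ms j \<subseteq> Ms k"
    proof (intro ballI)
      fix \<beta> \<beta>' assume "\<beta> \<in> {\<beta>. \<beta> < \<alpha>}" "\<beta>' \<in> {\<beta>. \<beta> < \<alpha>}"
      then have "max \<beta> \<beta>' \<in> {\<beta>. \<beta> < \<alpha>}"
        and "hier L \<phi> b \<beta> (Ms \<beta>) (fs \<beta>)" "hier L \<phi> b \<beta>' (Ms \<beta>') (fs \<beta>')"
        and "hier L \<phi> b (max \<beta> \<beta>') (Ms (max \<beta> \<beta>')) (fs (max \<beta> \<beta>'))"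
        using limit by auto
      then show "\<exists>k\<in>{\<beta>. \<beta> < \<alpha>}. Ms \<beta> \<union> Ms \<beta>' \<subseteq> Ms k"
        using hier_extends_le[of \<beta> "max \<beta> \<beta>'"] hier_extends_le[of \<beta>' "max \<beta> \<beta>'"]
        unfolding extends_def by (metis Un_least max.cobounded1 max.cobounded2)
    qed
  qed
qed

lemma hier_exists_restrict:
  fixes L :: "'v::lattice set" and \<phi> :: "'v \<Rightarrow> 'e::ordered_ab_group_add" and \<alpha> :: "'o::wellorder"
  assumes sys: "valuation_system L \<phi>" and ext: "extends C \<psi> L \<phi>"
  shows "hier C \<psi> b \<alpha> M f \<Longrightarrow> \<exists>N g. hier L \<phi> b \<alpha> N g"
proof (induction \<alpha> arbitrary: b M f rule: less_induct)
  case (less \<alpha>)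
  show ?case
  proof (cases \<alpha> rule: ordinal_cases)
    case zero
    then show ?thesis using hier.zero by blast
  next
    case (succ \<delta>)
    obtain M0 f0 where M0: "hier C \<psi> (\<not> b) \<delta> M0 f0" "step_ext b M0 f0"
      using hier_succE[OF less.prems succ] by metis
    obtain N0 g0 where N0: "hier L \<phi> (\<not> b) \<delta> N0 g0"
      using less.IH[OF is_succ_of_less[OF succ] M0(1)] by blast
    have "step_ext b N0 g0"
    proof (rule step_ext_restrict[OF _ _ M0(2)])
      show "sigma_distributive TYPE('v)" "R_complete TYPE('e)"
        using sys unfolding valuation_system_def by simp_all
      show "extends M0 f0 N0 g0" using hier_extends[OF ext M0(1) N0] .
      show "valuation N0 g0" using hier_valuation sys N0 unfolding valuation_system_def by blast
    qed
    then show ?thesis using hier.succ[OF succ N0] by blast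
  next
    case limit
    obtain Ms fs where Ms: "\<forall>\<beta><\<alpha>. hier C \<psi> b \<beta> (Ms \<beta>) (fs \<beta>)"
      "\<forall>\<beta><\<alpha>. extends M f (Ms \<beta>) (fs \<beta>)"
      using hier_limitE[OF less.prems limit] by metis
    have "\<forall>\<beta>. \<exists>N g. \<beta> < \<alpha> \<longrightarrow> hier L \<phi> b \<beta> N g"
      using less.IH Ms(1) by blast
    then obtain Ns gs where Ns: "\<forall>\<beta><\<alpha>. hier L \<phi> b \<beta> (Ns \<beta>) (gs \<beta>)"
      by metis
    have "\<forall>\<beta><\<alpha>. \<forall>x\<in>Ns \<beta>. f x = gs \<beta> x"
      using hier_extends[OF ext] Ms Ns unfolding extends_def by fastforce
    then show ?thesis using hier.limit[OF limit Ns refl] by blast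
  qed
qed

theorem lemma5p34:
  fixes L C :: "'v::lattice set"
    and \<phi> \<psi> :: "'v \<Rightarrow> 'e::ordered_ab_group_add"
    and \<alpha> :: "'o::wellorder"
  assumes "valuation_system L \<phi>"
    and "valuation_system C \<psi>"
    and "extends C \<psi> L \<phi>"
  shows "(Pi_alpha_extendible C \<psi> \<alpha> \<longrightarrow>
            Pi_alpha_extendible L \<phi> \<alpha> \<and>
            (\<forall>M f N g. hier C \<psi> True \<alpha> M f \<longrightarrow> hier L \<phi> True \<alpha> N g \<longrightarrow> extends M f N g))
       \<and> (Sigma_alpha_extendible C \<psi> \<alpha> \<longrightarrow>
            Sigma_alpha_extendible L \<phi> \<alpha> \<and>
            (\<forall>M f N g. hier C \<psi> False \<alpha> M f \<longrightarrow> hier L \<phi> False \<alpha> N g \<longrightarrow> extends M f N g))"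
  using hier_exists_restrict[OF assms(1,3)] hier_extends[OF assms(3)]
  unfolding Pi_alpha_extendible_def Sigma_alpha_extendible_def by blast

end
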